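(* Fix any configuration of open and closed sites on $\mathcal{L}$, and let $\tau=\inf\{n\ge0:\xi_n=\emptyset\}$. Then $$\tau=\inf\{m\ge0:\underline{\ell}_m>\overline{u}_m\}.$$
   Context: Let $\mathcal{L}=\{(n,m)\in\mathbb{Z}^2:n\ge0,\ n+m\text{ even}\}$. Each site of $\mathcal{L}$ is open or closed. For $z,z'\in\mathcal{L}$ write $z\to z'$ if there exist $k\ge0$ and sites $z=z_0,\dots,z_k=z'$ of $\mathcal{L}$ such that $z_0,\dots,z_{k-1}$ are open and $z_{i+1}-z_i\in\{(1,1),(2,0),(1,-1)\}$ for every $i$. Let $o=(0,0)$. Use the conventions $\sup\emptyset=-\infty$ and $\inf\emptyset=+\infty$. Define $\xi_n=\{x:o\to(n,x)\}$. Set $\overline{u}_0=\underline{\ell}_0=0$. For $n\ge1$, let $$\overline{\xi}_n=\{x:\exists y\le0\text{ such that }(0,y)\to(n,x)\text{ or }(1,y)\to(n,x)\}$$ and $\overline{u}_n=\sup\overline{\xi}_n$. Let $$\underline{\xi}_n=\{x:\exists y\ge0\text{ such that }(0,y)\to(n,x)\text{ or }(1,y)\to(n,x)\}$$ and $\underline{\ell}_n=\inf\underline{\xi}_n$. In all these definitions only sites of $\mathcal{L}$ are considered. *)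

theory Defs
  imports Main "HOL-Library.Extended_Real" "HOL-Library.Extended_Nat"
begin

definition inL :: "int \<times> int \<Rightarrow> bool" where
  "inL z \<longleftrightarrow> fst z \<ge> 0 \<and> even (fst z + snd z)"

definition steps :: "(int \<times> int) set" where
  "steps = {(1,1), (2,0), (1,-1)}"

text \<open>A configuration is a predicate omega; omega z means site z is open.
  reach omega z z' formalizes z -> z': a path z = z_0, ..., z_k = z' of sites of L
  with z_0..z_{k-1} open and increments in steps (k = 0 allowed).\<close>
inductive reach :: "(int \<times> int \<Rightarrow> bool) \<Rightarrow> int \<times> int \<Rightarrow> int \<times> int \<Rightarrow> bool"
  for \<omega> where
  refl: "inL z \<Longrightarrow> reach \<omega> z z"
| step: "inL z \<Longrightarrow> \<omega> z \<Longrightarrow> inL z' \<Longrightarrow> (fst z' - fst z, snd z' - snd z) \<in> steps \<Longrightarrow> reach \<omega> z' z''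
          \<Longrightarrow> reach \<omega> z z''"

definition xi :: "(int \<times> int \<Rightarrow> bool) \<Rightarrow> nat \<Rightarrow> int set" where
  "xi \<omega> n = {x. reach \<omega> (0,0) (int n, x)}"

definition xi_upper :: "(int \<times> int \<Rightarrow> bool) \<Rightarrow> nat \<Rightarrow> int set" where
  "xi_upper \<omega> n = {x. \<exists>y\<le>0. reach \<omega> (0,y) (int n, x) \<or> reach \<omega> (1,y) (int n, x)}"

definition xi_lower :: "(int \<times> int \<Rightarrow> bool) \<Rightarrow> nat \<Rightarrow> int set" where
  "xi_lower \<omega> n = {x. \<exists>y\<ge>0. reach \<omega> (0,y) (int n, x) \<or> reach \<omega> (1,y) (int n, x)}"

text \<open>Sup {} = -infinity, Inf {} = +infinity in ereal.\<close>
definition u_bar :: "(int \<times> int \<Rightarrow> bool) \<Rightarrow> nat \<Rightarrow> ereal" where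
  "u_bar \<omega> n = (if n = 0 then 0 else Sup ((\<lambda>x. ereal (real_of_int x)) ` xi_upper \<omega> n))"

definition l_bar :: "(int \<times> int \<Rightarrow> bool) \<Rightarrow> nat \<Rightarrow> ereal" where
  "l_bar \<omega> n = (if n = 0 then 0 else Inf ((\<lambda>x. ereal (real_of_int x)) ` xi_lower \<omega> n))"

end

theory Submission
  imports Defs
begin

text \<open>
  Call a site left-avoiding if an open path from one of the seeds (0,y), (1,y) with y <= 0
  reaches it without ever visiting the cluster of the origin. A left-avoiding site lies strictly
  below every cluster site on the same or an adjacent level: oriented paths on L cannot cross
  without sharing a site, which is verified by induction on the sum of the two levels, stepping
  one or both paths back by one site.

  If level n+1 is the first one at which the cluster dies out and r is a cluster site of level n,
  every site of level n+1 reached from the left seeds is therefore left-avoiding and below r, so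
  u_bar (n+1) < r; reflecting in the horizontal axis gives r < l_bar (n+1). Conversely a site of
  xi m lies in both xi_upper m and xi_lower m, so l_bar m <= u_bar m while the cluster survives.
\<close>

definition is_step :: "int \<times> int \<Rightarrow> int \<times> int \<Rightarrow> bool" where
  "is_step z z' \<longleftrightarrow> (fst z' - fst z, snd z' - snd z) \<in> steps"

lemma is_step_iff:
  "is_step z z' \<longleftrightarrow>
     fst z' = fst z + 1 \<and> (snd z' = snd z + 1 \<or> snd z' = snd z - 1) \<or>
     fst z' = fst z + 2 \<and> snd z' = snd z"
  by (auto simp: is_step_def steps_def)

lemma inL_same_level_gap:
  assumes "inL p" "inL q" "fst p = fst q" "snd p < snd q"
  shows "snd p + 2 \<le> snd q"
  using assms unfolding inL_def by presburger

text \<open>The three hypotheses correspond to stepping back only the second, only the first, or both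
  sites on a common level.\<close>
lemma below_after_steps:
  assumes "inL p" "inL q" "s \<noteq> t"
    and "\<bar>fst p - fst q\<bar> \<le> 1" "snd p < snd q" "\<bar>fst s - fst t\<bar> \<le> 1"
    and "s = p \<and> is_step q t \<or> is_step p s \<and> t = q \<or> is_step p s \<and> is_step q t \<and> fst s = fst t"
  shows "snd s < snd t"
proof -
  have gap: "fst p = fst q \<Longrightarrow> snd p + 2 \<le> snd q"
    using inL_same_level_gap assms(1,2,5) by blast
  have ne: "fst s = fst t \<Longrightarrow> snd s \<noteq> snd t"
    using assms(3) by (simp add: prod_eq_iff)
  show ?thesis
    using assms(4-7) gap ne unfolding is_step_iff by (cases "fst p = fst q") auto
qed

lemma reach_step:
  "inL z \<Longrightarrow> \<omega> z \<Longrightarrow> inL z' \<Longrightarrow> is_step z z' \<Longrightarrow> reach \<omega> z' z'' \<Longrightarrow> reach \<omega> z z''"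
  unfolding is_step_def by (rule reach.step)

lemma reach_inL: "reach \<omega> a b \<Longrightarrow> inL a \<and> inL b"
  by (induction rule: reach.induct) auto

lemma reach_trans: "reach \<omega> a b \<Longrightarrow> reach \<omega> b c \<Longrightarrow> reach \<omega> a c"
  by (induction rule: reach.induct) (auto intro: reach.step)

lemma reach_fst_less: "reach \<omega> a b \<Longrightarrow> a \<noteq> b \<Longrightarrow> fst a < fst b"
  by (induction rule: reach.induct) (fastforce simp: steps_def)+

lemma reach_from_origin_level0: "reach \<omega> (0, 0) (0, y) \<Longrightarrow> y = 0"
  using reach_fst_less by fastforce

lemma reach_last_step:
  assumes "reach \<omega> a b" "a \<noteq> b"
  shows "\<exists>q. reach \<omega> a q \<and> \<omega> q \<and> inL q \<and> is_step q b"
  using assms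
proof (induction rule: reach.induct)
  case (refl z)
  then show ?case by simp
next
  case (step z z' z'')
  show ?case
  proof (cases "z' = z''")
    case True
    then show ?thesis
      using step.hyps reach.refl[of z \<omega>] unfolding is_step_def by blast
  next
    case False
    then obtain q where "reach \<omega> z' q" "\<omega> q" "inL q" "is_step q z''"
      using step.IH by blast
    moreover have "reach \<omega> z q"
      using step.hyps \<open>reach \<omega> z' q\<close> by (auto intro: reach.step)
    ultimately show ?thesis by blast
  qed
qed

inductive left_avoiding :: "(int \<times> int \<Rightarrow> bool) \<Rightarrow> int \<times> int \<Rightarrow> bool" for \<omega> where
  seed: "inL s \<Longrightarrow> fst s \<le> 1 \<Longrightarrow> snd s \<le> 0 \<Longrightarrow> \<not> reach \<omega> (0, 0) s \<Longrightarrow> left_avoiding \<omega> s"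
| step: "left_avoiding \<omega> s \<Longrightarrow> \<omega> s \<Longrightarrow> inL s' \<Longrightarrow> is_step s s' \<Longrightarrow> \<not> reach \<omega> (0, 0) s'
          \<Longrightarrow> left_avoiding \<omega> s'"

lemma left_avoiding_inL: "left_avoiding \<omega> s \<Longrightarrow> inL s"
  by (induction rule: left_avoiding.induct) auto

lemma left_avoiding_not_reached: "left_avoiding \<omega> s \<Longrightarrow> \<not> reach \<omega> (0, 0) s"
  by (induction rule: left_avoiding.induct) auto

lemma left_avoiding_low_level: "left_avoiding \<omega> s \<Longrightarrow> fst s \<le> 1 \<Longrightarrow> snd s \<le> fst s - 2"
proof (induction rule: left_avoiding.induct)
  case (seed s)
  have "s \<noteq> (0, 0)"
    using seed.hyps(4) reach.refl[of "(0, 0)" \<omega>] by (auto simp: inL_def)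
  with seed.hyps(1-3) show ?case
    by (cases s) (simp add: inL_def; presburger)
next
  case (step s s')
  then show ?case
    using left_avoiding_inL[OF step.hyps(1)] by (auto simp: inL_def is_step_iff)
qed

lemma left_avoiding_last_step:
  "left_avoiding \<omega> s \<Longrightarrow> 2 \<le> fst s \<Longrightarrow> \<exists>p. left_avoiding \<omega> p \<and> \<omega> p \<and> is_step p s"
  by (erule left_avoiding.cases) auto

lemma reach_left_avoiding:
  "reach \<omega> a b \<Longrightarrow> left_avoiding \<omega> a \<Longrightarrow> \<not> reach \<omega> (0, 0) b \<Longrightarrow> left_avoiding \<omega> b"
proof (induction rule: reach.induct)
  case (refl z)
  then show ?case by blast
next
  case (step z z' z'')
  have "\<not> reach \<omega> (0, 0) z'"
    using step.prems(2) step.hyps(5) reach_trans by blast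
  then have "left_avoiding \<omega> z'"
    using step by (auto simp: is_step_def intro: left_avoiding.step)
  then show ?case
    using step.IH step.prems(2) by blast
qed

lemma left_avoiding_below_cluster:
  "left_avoiding \<omega> s \<Longrightarrow> reach \<omega> (0, 0) t \<Longrightarrow> \<bar>fst s - fst t\<bar> \<le> 1 \<Longrightarrow> snd s < snd t"
proof (induction "nat (fst s + fst t)" arbitrary: s t rule: less_induct)
  case less
  have sL: "inL s" and tL: "inL t"
    using left_avoiding_inL[OF less.prems(1)] reach_inL[OF less.prems(2)] by auto
  have "s \<noteq> t"
    using left_avoiding_not_reached[OF less.prems(1)] less.prems(2) by auto
  have IH: "snd p < snd q"
    if "left_avoiding \<omega> p" "reach \<omega> (0, 0) q" "\<bar>fst p - fst q\<bar> \<le> 1" "fst p + fst q < fst s + fst t"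
    for p q
    using less.hyps[OF _ that(1-3)] that(4) left_avoiding_inL[OF that(1)] reach_inL[OF that(2)]
    by (auto simp: inL_def)
  have cluster_last_step: "\<exists>q. reach \<omega> (0, 0) q \<and> inL q \<and> is_step q t" if "fst t \<noteq> 0"
    using reach_last_step[OF less.prems(2)] that by (metis fst_conv)
  consider (origin) "fst t = 0"
    | (cluster_back) "0 < fst t" "fst s \<le> 1 \<or> fst s < fst t"
    | (avoiding_back) "0 < fst t" "fst t < fst s"
    | (both_back) "2 \<le> fst s" "fst s = fst t"
    using tL less.prems(3) by (fastforce simp: inL_def)
  then show ?case
  proof cases
    case origin
    then have "t = (0, 0)"
      using reach_from_origin_level0 less.prems(2) by (cases t) auto
    then show ?thesis
      using left_avoiding_low_level[OF less.prems(1)] less.prems(3) by (auto simp: abs_le_iff)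
  next
    case cluster_back
    then obtain q where q: "reach \<omega> (0, 0) q" "inL q" "is_step q t"
      using cluster_last_step by auto
    have "snd s < snd q"
      using IH[OF less.prems(1) q(1)] q sL cluster_back less.prems(3)
      by (auto simp: is_step_iff inL_def)
    then show ?thesis
      using below_after_steps[OF sL q(2) \<open>s \<noteq> t\<close>] q(3) less.prems(3) cluster_back
      by (auto simp: is_step_iff)
  next
    case avoiding_back
    then obtain p where p: "left_avoiding \<omega> p" "is_step p s"
      using left_avoiding_last_step[OF less.prems(1)] by auto
    have "snd p < snd t"
      using IH[OF p(1) less.prems(2)] p avoiding_back less.prems(3) by (auto simp: is_step_iff)
    then show ?thesis
      using below_after_steps[OF left_avoiding_inL[OF p(1)] tL \<open>s \<noteq> t\<close>] p(2) less.prems(3)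
        avoiding_back by (auto simp: is_step_iff)
  next
    case both_back
    then obtain p where p: "left_avoiding \<omega> p" "is_step p s"
      using left_avoiding_last_step[OF less.prems(1)] by auto
    obtain q where q: "reach \<omega> (0, 0) q" "inL q" "is_step q t"
      using cluster_last_step both_back by auto
    have "snd p < snd q"
      using IH[OF p(1) q(1)] p q both_back by (auto simp: is_step_iff)
    then show ?thesis
      using below_after_steps[OF left_avoiding_inL[OF p(1)] q(2) \<open>s \<noteq> t\<close>] p(2) q(3)
        less.prems(3) both_back by (auto simp: is_step_iff)
  qed
qed

lemma reached_from_left_seed_below_extinct_level:
  assumes "xi \<omega> (Suc n) = {}" "r \<in> xi \<omega> n"
    and "fst s \<le> 1" "snd s \<le> 0" "reach \<omega> s (int (Suc n), x)"
  shows "x < r"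
proof -
  have unreached: "\<not> reach \<omega> (0, 0) (int (Suc n), x)"
    using assms(1) by (auto simp: xi_def)
  then have "\<not> reach \<omega> (0, 0) s"
    using assms(5) reach_trans by blast
  then have "left_avoiding \<omega> s"
    using assms(3,4) reach_inL[OF assms(5)] by (auto intro: left_avoiding.seed)
  then have "left_avoiding \<omega> (int (Suc n), x)"
    using reach_left_avoiding assms(5) unreached by blast
  moreover have "reach \<omega> (0, 0) (int n, r)"
    using assms(2) by (simp add: xi_def)
  ultimately show ?thesis
    using left_avoiding_below_cluster by fastforce
qed

lemma u_bar_less_at_extinction:
  assumes "xi \<omega> (Suc n) = {}" "r \<in> xi \<omega> n"
  shows "u_bar \<omega> (Suc n) < ereal (real_of_int r)"
proof -
  have "x < r" if x: "x \<in> xi_upper \<omega> (Suc n)" for x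
  proof -
    obtain y where "y \<le> 0" "reach \<omega> (0, y) (int (Suc n), x) \<or> reach \<omega> (1, y) (int (Suc n), x)"
      using x unfolding xi_upper_def by blast
    then show "x < r"
      using reached_from_left_seed_below_extinct_level[OF assms, of "(0, y)"]
        reached_from_left_seed_below_extinct_level[OF assms, of "(1, y)"] by auto
  qed
  then have "u_bar \<omega> (Suc n) \<le> ereal (real_of_int r - 1)"
    unfolding u_bar_def by (force intro!: Sup_least)
  then show ?thesis
    by (simp add: le_less_trans)
qed

definition mirror :: "int \<times> int \<Rightarrow> int \<times> int" where
  "mirror z = (fst z, - snd z)"

lemma mirror_mirror [simp]: "mirror (mirror z) = z"
  by (simp add: mirror_def)

lemma inL_mirror [simp]: "inL (mirror z) \<longleftrightarrow> inL z"
  by (simp add: inL_def mirror_def)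

lemma is_step_mirror [simp]: "is_step (mirror z) (mirror z') \<longleftrightarrow> is_step z z'"
  unfolding is_step_iff mirror_def by auto

lemma reach_mirror: "reach \<omega> a b \<Longrightarrow> reach (\<omega> \<circ> mirror) (mirror a) (mirror b)"
proof (induction rule: reach.induct)
  case (refl z)
  have "inL (mirror z)"
    using refl.hyps by (simp only: inL_mirror)
  then show ?case
    by (rule reach.refl)
next
  case (step z z' z'')
  have "is_step z z'"
    using step.hyps(4) unfolding is_step_def .
  then have "is_step (mirror z) (mirror z')"
    by (simp only: is_step_mirror)
  moreover have "inL (mirror z)" "inL (mirror z')" "(\<omega> \<circ> mirror) (mirror z)"
    using step.hyps(1-3) by simp_all
  ultimately show ?case
    using reach_step step.IH by blast
qed

lemma reach_mirror_iff: "reach (\<omega> \<circ> mirror) a b \<longleftrightarrow> reach \<omega> (mirror a) (mirror b)"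
  using reach_mirror[of "\<omega> \<circ> mirror" a b] reach_mirror[of \<omega> "mirror a" "mirror b"]
  by (auto simp: comp_def)

lemma xi_mirror: "xi (\<omega> \<circ> mirror) n = uminus ` xi \<omega> n"
  by (force simp: xi_def reach_mirror_iff mirror_def)

lemma xi_upper_mirror: "xi_upper (\<omega> \<circ> mirror) n = uminus ` xi_lower \<omega> n"
proof -
  have reflect: "reach (\<omega> \<circ> mirror) (k, y) (int n, x) \<longleftrightarrow> reach \<omega> (k, - y) (int n, - x)"
    for k y x
    by (simp add: reach_mirror_iff mirror_def)
  have "x \<in> xi_upper (\<omega> \<circ> mirror) n \<longleftrightarrow> - x \<in> xi_lower \<omega> n" for x
    unfolding xi_upper_def xi_lower_def mem_Collect_eq reflect
    by (metis neg_0_le_iff_le minus_minus)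
  then show ?thesis
    by (intro set_eqI) (metis image_iff minus_minus)
qed

lemma u_bar_mirror: "u_bar (\<omega> \<circ> mirror) n = - l_bar \<omega> n"
proof -
  have "(\<lambda>x. ereal (real_of_int x)) ` uminus ` S = (\<lambda>x. - ereal (real_of_int x)) ` S"
    for S :: "int set"
    by (simp add: image_image)
  then show ?thesis
    unfolding u_bar_def l_bar_def xi_upper_mirror by (simp only: ereal_SUP_uminus_eq) simp
qed

lemma l_bar_greater_at_extinction:
  assumes "xi \<omega> (Suc n) = {}" "r \<in> xi \<omega> n"
  shows "ereal (real_of_int r) < l_bar \<omega> (Suc n)"
proof -
  have "u_bar (\<omega> \<circ> mirror) (Suc n) < ereal (real_of_int (- r))"
    using assms by (intro u_bar_less_at_extinction) (auto simp: xi_mirror)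
  then have "- l_bar \<omega> (Suc n) < - ereal (real_of_int r)"
    by (simp add: u_bar_mirror)
  then show ?thesis
    by (simp only: ereal_minus_less_minus)
qed

lemma l_bar_le_u_bar:
  assumes "xi \<omega> m \<noteq> {}"
  shows "l_bar \<omega> m \<le> u_bar \<omega> m"
proof (cases "m = 0")
  case False
  obtain x where "x \<in> xi_upper \<omega> m" "x \<in> xi_lower \<omega> m"
    using assms by (force simp: xi_def xi_upper_def xi_lower_def)
  then have "l_bar \<omega> m \<le> ereal (real_of_int x)" "ereal (real_of_int x) \<le> u_bar \<omega> m"
    using False by (auto simp: u_bar_def l_bar_def intro: Sup_upper Inf_lower)
  then show ?thesis
    by (rule order.trans)
qed (simp add: u_bar_def l_bar_def)

lemma xi_0_nonempty: "xi \<omega> 0 \<noteq> {}"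
  using reach.refl[of "(0, 0)" \<omega>] by (auto simp: xi_def inL_def)

lemma Inf_enat_eqI:
  assumes "\<And>m. Q m \<Longrightarrow> P m" and "\<And>n. P n \<Longrightarrow> \<forall>k<n. \<not> P k \<Longrightarrow> Q n"
  shows "Inf {enat n | n. P n} = Inf {enat n | n. Q n}"
proof (rule antisym)
  show "Inf {enat n | n. P n} \<le> Inf {enat n | n. Q n}"
    by (rule Inf_superset_mono) (auto dest: assms(1))
next
  show "Inf {enat n | n. Q n} \<le> Inf {enat n | n. P n}"
  proof (rule Inf_greatest)
    fix z assume "z \<in> {enat n | n. P n}"
    then obtain n where n: "z = enat n" "P n" by auto
    have "Q (LEAST k. P k)"
      using assms(2) LeastI[of P, OF n(2)] not_less_Least[of _ P] by blast
    then have "Inf {enat n | n. Q n} \<le> enat (LEAST k. P k)"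
      by (auto intro: Inf_lower)
    also have "\<dots> \<le> z"
      using n Least_le[of P n] by simp
    finally show "Inf {enat n | n. Q n} \<le> z" .
  qed
qed

theorem lemma2p1:
  fixes \<omega> :: "int \<times> int \<Rightarrow> bool"
  shows "Inf {enat n | n. xi \<omega> n = {}} = Inf {enat m | m. l_bar \<omega> m > u_bar \<omega> m}"
proof (rule Inf_enat_eqI)
  show "xi \<omega> m = {}" if "l_bar \<omega> m > u_bar \<omega> m" for m
    using that l_bar_le_u_bar[of \<omega> m] by fastforce
next
  fix n assume extinct: "xi \<omega> n = {}" and alive: "\<forall>k<n. xi \<omega> k \<noteq> {}"
  then obtain k where n: "n = Suc k"
    using xi_0_nonempty not0_implies_Suc by metis
  then obtain r where "r \<in> xi \<omega> k"
    using alive by auto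
  then show "l_bar \<omega> n > u_bar \<omega> n"
    using u_bar_less_at_extinction l_bar_greater_at_extinction extinct n
    by (meson less_trans)
qed

end
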